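(* For any two positive integers $l$ and $s$ with $l \geq 2$, there exists a hypergraph $\mathcal{F}$ (with $s < |e|$ for every hyperedge $e$ of $\mathcal{F}$) such that $$\chi\left({\rm KG}^2(\mathcal{F}, s)\right) = l \quad \text{and} \quad {\rm ecd}^2(\mathcal{F}, s) = l + s.$$
   Context: A hypergraph $\mathcal{F}$ consists of a finite vertex set $V(\mathcal{F})$ and a set $E(\mathcal{F}) \subseteq 2^{V(\mathcal{F})} \setminus \{\varnothing\}$ of hyperedges. For an integer $r \geq 2$ and a nonnegative integer $s$ with $s < |e|$ for every hyperedge $e$ of $\mathcal{F}$, the generalized Kneser hypergraph ${\rm KG}^r(\mathcal{F}, s)$ is the $r$-uniform hypergraph whose vertex set is $E(\mathcal{F})$, in which $r$ distinct hyperedges $e_1, \dots, e_r$ of $\mathcal{F}$ form a hyperedge whenever $|e_i \cap e_j| \leq s$ for all distinct $i, j \in \{1, \dots, r\}$. Its chromatic number $\chi$ is the minimum size of a set $C$ admitting a map $f : E(\mathcal{F}) \to C$ such that no hyperedge of ${\rm KG}^r(\mathcal{F}, s)$ is monochromatic (for $r = 2$ this is the ordinary chromatic number of the graph). For sets $A, B$ and a nonnegative integer $s$, write $A \subseteq_s B$ if $|A \setminus B| \leq s$. The $s$-th equitable $r$-colorability defect ${\rm ecd}^r(\mathcal{F}, s)$ is the minimum cardinality of a set $X_0 \subseteq V(\mathcal{F})$ for which there is a partition $\{X_1, \dots, X_r\}$ of $V(\mathcal{F}) \setminus X_0$ (parts may be empty) such that $\big||X_i| - |X_j|\big| \leq 1$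 for all $1 \leq i < j \leq r$, and $e \not\subseteq_s X_i$ for every hyperedge $e \in E(\mathcal{F})$ and every $i \in \{1, \dots, r\}$. *)

theory Defs
  imports Main
begin

definition hypergraph :: "'a set \<Rightarrow> 'a set set \<Rightarrow> bool" where
  "hypergraph V E \<longleftrightarrow> finite V \<and> E \<subseteq> Pow V - {{}}"

definition KG_edges :: "nat \<Rightarrow> 'a set set \<Rightarrow> nat \<Rightarrow> 'a set set set" where
  "KG_edges r E s = {S. S \<subseteq> E \<and> card S = r \<and>
      (\<forall>e1\<in>S. \<forall>e2\<in>S. e1 \<noteq> e2 \<longrightarrow> card (e1 \<inter> e2) \<le> s)}"

definition KG_colorable :: "nat \<Rightarrow> 'a set set \<Rightarrow> nat \<Rightarrow> nat \<Rightarrow> bool" where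
  "KG_colorable r E s k \<longleftrightarrow> (\<exists>f. (\<forall>e\<in>E. f e < k) \<and>
      (\<forall>S\<in>KG_edges r E s. \<not> (\<exists>c. \<forall>e\<in>S. f e = c)))"

definition KG_chromatic :: "nat \<Rightarrow> 'a set set \<Rightarrow> nat \<Rightarrow> nat" where
  "KG_chromatic r E s = (LEAST k. KG_colorable r E s k)"

definition subseteq_s :: "'a set \<Rightarrow> nat \<Rightarrow> 'a set \<Rightarrow> bool" where
  "subseteq_s A s B \<longleftrightarrow> card (A - B) \<le> s"

(* X0 admits an equitable partition of V - X0 into r (possibly empty) parts
   X_0..X_{r-1} (given by the part-index map p) such that no hyperedge e
   satisfies e \<subseteq>_s X_i. *)
definition ecd_admissible :: "nat \<Rightarrow> 'a set \<Rightarrow> 'a set set \<Rightarrow> nat \<Rightarrow> 'a set \<Rightarrow> bool" where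
  "ecd_admissible r V E s X0 \<longleftrightarrow> X0 \<subseteq> V \<and>
     (\<exists>p :: 'a \<Rightarrow> nat. (\<forall>v\<in>V - X0. p v < r) \<and>
        (\<forall>i<r. \<forall>j<r. card {v\<in>V - X0. p v = i} \<le> card {v\<in>V - X0. p v = j} + 1) \<and>
        (\<forall>e\<in>E. \<forall>i<r. \<not> subseteq_s e s {v\<in>V - X0. p v = i}))"

definition ecd :: "nat \<Rightarrow> 'a set \<Rightarrow> 'a set set \<Rightarrow> nat \<Rightarrow> nat" where
  "ecd r V E s = (LEAST n. \<exists>X0. ecd_admissible r V E s X0 \<and> card X0 = n)"

end

theory Submission
  imports Defs
begin

text \<open>
  Take the sunflower of \<open>l\<close> hyperedges \<open>{0,..,s-1} \<union> {s+i}\<close>, \<open>i < l\<close>. Any two of them meet in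
  exactly the \<open>s\<close> kernel vertices, so \<open>KG\<^sup>2(F,s)\<close> is the complete graph on \<open>l\<close> vertices and
  its chromatic number is \<open>l\<close>. Every vertex lies in a hyperedge \<open>e\<close> of size \<open>s+1\<close>; a vertex
  that is not removed lies in some part \<open>X\<^sub>i\<close>, and then \<open>|e - X\<^sub>i| \<le> s\<close>. Hence all \<open>l+s\<close>
  vertices must be removed, while removing all of them is admissible since \<open>|e| > s\<close>.
\<close>

lemma KG_edges_2_pair:
  assumes "e1 \<in> E" "e2 \<in> E" "e1 \<noteq> e2" "card (e1 \<inter> e2) \<le> s"
  shows "{e1, e2} \<in> KG_edges 2 E s"
  using assms by (auto simp: KG_edges_def Int_commute)

lemma KG_colorable_2_complete_iff:
  assumes "finite E"
    and small: "\<And>e1 e2. e1 \<in> E \<Longrightarrow> e2 \<in> E \<Longrightarrow> e1 \<noteq> e2 \<Longrightarrow> card (e1 \<inter> e2) \<le> s"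
  shows "KG_colorable 2 E s k \<longleftrightarrow> card E \<le> k"
proof
  assume "KG_colorable 2 E s k"
  then obtain f where f_range: "\<forall>e\<in>E. f e < k"
    and proper: "\<forall>S\<in>KG_edges 2 E s. \<not> (\<exists>c. \<forall>e\<in>S. f e = c)"
    unfolding KG_colorable_def by blast
  have "inj_on f E"
  proof (rule inj_onI, rule ccontr)
    fix e1 e2 assume "e1 \<in> E" "e2 \<in> E" "f e1 = f e2" "e1 \<noteq> e2"
    then show False
      using proper KG_edges_2_pair[OF \<open>e1 \<in> E\<close> \<open>e2 \<in> E\<close> \<open>e1 \<noteq> e2\<close> small] by auto
  qed
  then have "card E = card (f ` E)" by (simp add: card_image)
  also have "\<dots> \<le> card {..<k}" using f_range by (intro card_mono) auto
  finally show "card E \<le> k" by simp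
next
  assume "card E \<le> k"
  obtain f where f: "bij_betw f E {0..<card E}"
    using ex_bij_betw_finite_nat[OF \<open>finite E\<close>] by blast
  show "KG_colorable 2 E s k"
    unfolding KG_colorable_def
  proof (intro exI conjI ballI notI)
    fix e assume "e \<in> E"
    then show "f e < k" using bij_betw_apply[OF f] \<open>card E \<le> k\<close> by fastforce
  next
    fix S assume S: "S \<in> KG_edges 2 E s" and "\<exists>c. \<forall>e\<in>S. f e = c"
    then obtain c where c: "\<forall>e\<in>S. f e = c" by blast
    from S obtain e1 e2 where "S = {e1, e2}" "e1 \<noteq> e2" "S \<subseteq> E"
      unfolding KG_edges_def by (auto simp: card_2_iff)
    then show False
      using c f by (auto simp: bij_betw_def dest: inj_onD)
  qed
qed

lemma KG_chromatic_2_complete: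
  assumes "finite E"
    and "\<And>e1 e2. e1 \<in> E \<Longrightarrow> e2 \<in> E \<Longrightarrow> e1 \<noteq> e2 \<Longrightarrow> card (e1 \<inter> e2) \<le> s"
  shows "KG_chromatic 2 E s = card E"
  unfolding KG_chromatic_def
  by (rule Least_equality) (simp_all add: KG_colorable_2_complete_iff[OF assms])

lemma ecd_admissible_all:
  assumes "\<forall>e\<in>E. s < card e"
  shows "ecd_admissible r V E s V"
  using assms unfolding ecd_admissible_def subseteq_s_def
  by (intro conjI exI[of _ "\<lambda>_. 0"]) auto

lemma ecd_admissible_eq_if_covered:
  assumes cover: "\<And>v. v \<in> V \<Longrightarrow> \<exists>e\<in>E. v \<in> e \<and> finite e \<and> card e \<le> Suc s"
    and adm: "ecd_admissible r V E s X0"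
  shows "X0 = V"
proof (rule ccontr)
  assume "X0 \<noteq> V"
  from adm obtain p :: "'a \<Rightarrow> nat" where "X0 \<subseteq> V"
    and p_range: "\<forall>v\<in>V - X0. p v < r"
    and no_sub: "\<forall>e\<in>E. \<forall>i<r. \<not> subseteq_s e s {v\<in>V - X0. p v = i}"
    unfolding ecd_admissible_def by blast
  with \<open>X0 \<noteq> V\<close> obtain v where v: "v \<in> V" "v \<notin> X0" by blast
  with cover obtain e where e: "e \<in> E" "v \<in> e" "finite e" "card e \<le> Suc s" by blast
  have "card (e - {w\<in>V - X0. p w = p v}) \<le> card (e - {v})"
    using v e by (intro card_mono) auto
  also have "\<dots> \<le> s" using e by simp
  finally show False
    using no_sub p_range v e(1) unfolding subseteq_s_def by auto
qed

lemma ecd_eq_card_if_covered: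
  assumes "\<forall>e\<in>E. s < card e"
    and "\<And>v. v \<in> V \<Longrightarrow> \<exists>e\<in>E. v \<in> e \<and> finite e \<and> card e \<le> Suc s"
  shows "ecd r V E s = card V"
  unfolding ecd_def
proof (rule Least_equality)
  show "\<exists>X0. ecd_admissible r V E s X0 \<and> card X0 = card V"
    using ecd_admissible_all[OF assms(1)] by blast
next
  fix n assume "\<exists>X0. ecd_admissible r V E s X0 \<and> card X0 = n"
  then show "card V \<le> n" using ecd_admissible_eq_if_covered[OF assms(2)] by blast
qed

definition sunflower_petal :: "nat \<Rightarrow> nat \<Rightarrow> nat set" where
  "sunflower_petal s i = insert (s + i) {..<s}"

lemma card_sunflower_petal [simp]: "card (sunflower_petal s i) = Suc s"
  by (simp add: sunflower_petal_def)

lemma sunflower_petal_inject: "sunflower_petal s i = sunflower_petal s j \<longleftrightarrow> i = j"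
  by (auto simp: sunflower_petal_def)

lemma card_sunflower_petal_Int:
  assumes "i \<noteq> j"
  shows "card (sunflower_petal s i \<inter> sunflower_petal s j) = s"
proof -
  have "sunflower_petal s i \<inter> sunflower_petal s j = {..<s}"
    using assms by (auto simp: sunflower_petal_def)
  then show ?thesis by simp
qed

lemma card_sunflower: "card (sunflower_petal s ` {..<l}) = l"
  by (simp add: card_image inj_on_def sunflower_petal_inject)

lemma sunflower_covers:
  assumes "0 < l" "v < l + s"
  shows "\<exists>i<l. v \<in> sunflower_petal s i"
proof (cases "v < s")
  case True
  with assms show ?thesis by (auto simp: sunflower_petal_def)
next
  case False
  with assms show ?thesis by (intro exI[of _ "v - s"]) (auto simp: sunflower_petal_def)
qed

theorem theorem2:
  fixes l s :: nat
  assumes "l \<ge> 2" and "s \<ge> 1"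
  shows "\<exists>(V :: nat set) E. hypergraph V E \<and> (\<forall>e\<in>E. s < card e) \<and>
           KG_chromatic 2 E s = l \<and> ecd 2 V E s = l + s"
proof (intro exI conjI)
  let ?V = "{..<l + s}" and ?E = "sunflower_petal s ` {..<l}"
  show "hypergraph ?V ?E"
    by (auto simp: hypergraph_def sunflower_petal_def)
  show sizes: "\<forall>e\<in>?E. s < card e" by simp
  have "card (e1 \<inter> e2) \<le> s" if "e1 \<in> ?E" "e2 \<in> ?E" "e1 \<noteq> e2" for e1 e2
    using that by clarify (metis card_sunflower_petal_Int order_refl)
  then show "KG_chromatic 2 ?E s = l"
    using KG_chromatic_2_complete[of ?E s] card_sunflower by simp
  have "\<exists>e\<in>?E. v \<in> e \<and> finite e \<and> card e \<le> Suc s" if "v \<in> ?V" for v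
    using sunflower_covers[of l v s] assms(1) that by (auto simp: sunflower_petal_def)
  then have "ecd 2 ?V ?E s = card ?V" by (rule ecd_eq_card_if_covered[OF sizes])
  then show "ecd 2 ?V ?E s = l + s" by simp
qed

end
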